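(* Let $n\ge2$ and $G=\frac1n(1,1)$ acting on $\Bbbk_J[u,v]$. Then $\Bbbk_J[u,v]^G\cong\Bbbk\langle X_0,\dots,X_n\rangle/I$, via $X_i\mapsto\frac{(-1)^i}{i!}u^{n-i}v^i$, where $I$ is the two-sided ideal generated by $$\sum_{k=0}^{j}\binom{n-i}{k}X_{j-k}X_i-\sum_{\ell=0}^{i}\binom{n-j}{\ell}X_{i-\ell}X_j\qquad(0\le i<j\le n),$$ $$iX_iX_j-(j+1)X_{i-1}X_{j+1}+\big(n-1-(j-i)\big)X_{i-1}X_j\qquad(1\le i\le j<n).$$
   Context: $\Bbbk$ is algebraically closed of characteristic $0$; $\Bbbk_J[u,v]=\Bbbk\langle u,v\rangle/(vu-uv-u^2)$, graded with $\deg u=\deg v=1$. $\frac1n(1,1)$ is the cyclic group generated by $\mathrm{diag}(\omega_n,\omega_n)$, $\omega_n$ a primitive $n$th root of unity, acting by $u\mapsto\omega_nu$, $v\mapsto\omega_nv$; its invariant ring is the $n$th Veronese subring $\bigoplus_{i\ge0}\Bbbk_J[u,v]_{ni}$. *)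

theory Defs
  imports Main "HOL-Library.Function_Algebras" "HOL-Computational_Algebra.Polynomial"
begin

text \<open>Free associative algebra k<A> over an alphabet: an element is a function
  from words ('a list) to coefficients in 'k with finite support, supported on
  words over the alphabet A.  Addition/subtraction are pointwise (Function_Algebras);
  the algebra product is the concatenation (convolution) product fmul.\<close>

definition fsupp :: "('a list \<Rightarrow> 'k::zero) \<Rightarrow> bool" where
  "fsupp p \<longleftrightarrow> finite {w. p w \<noteq> 0}"

definition falg :: "'a set \<Rightarrow> ('a list \<Rightarrow> 'k::zero) set" where
  "falg A = {p. fsupp p \<and> (\<forall>w. p w \<noteq> 0 \<longrightarrow> set w \<subseteq> A)}"

definition fword :: "'a list \<Rightarrow> ('a list \<Rightarrow> 'k::comm_ring_1)" where
  "fword w = (\<lambda>w'. if w' = w then 1 else 0)"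

definition fsmult :: "'k::comm_ring_1 \<Rightarrow> ('a list \<Rightarrow> 'k) \<Rightarrow> ('a list \<Rightarrow> 'k)" where
  "fsmult c p = (\<lambda>w. c * p w)"

definition fmul :: "('a list \<Rightarrow> 'k::comm_ring_1) \<Rightarrow> ('a list \<Rightarrow> 'k) \<Rightarrow> ('a list \<Rightarrow> 'k)" where
  "fmul p q = (\<lambda>w. \<Sum>i\<le>length w. p (take i w) * q (drop i w))"

inductive_set fideal :: "'a set \<Rightarrow> ('a list \<Rightarrow> 'k::comm_ring_1) set \<Rightarrow> ('a list \<Rightarrow> 'k) set"
  for A R where
  gen: "r \<in> R \<Longrightarrow> r \<in> fideal A R"
| zero: "0 \<in> fideal A R"
| add: "a \<in> fideal A R \<Longrightarrow> b \<in> fideal A R \<Longrightarrow> a + b \<in> fideal A R"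
| lmul: "a \<in> fideal A R \<Longrightarrow> c \<in> falg A \<Longrightarrow> fmul c a \<in> fideal A R"
| rmul: "a \<in> fideal A R \<Longrightarrow> c \<in> falg A \<Longrightarrow> fmul a c \<in> fideal A R"

definition fmono :: "('a \<Rightarrow> ('b list \<Rightarrow> 'k::comm_ring_1)) \<Rightarrow> 'a list \<Rightarrow> ('b list \<Rightarrow> 'k)" where
  "fmono f w = foldr (\<lambda>x acc. fmul (f x) acc) w (fword [])"

definition fsubst :: "('a \<Rightarrow> ('b list \<Rightarrow> 'k::comm_ring_1)) \<Rightarrow> ('a list \<Rightarrow> 'k) \<Rightarrow> ('b list \<Rightarrow> 'k)" where
  "fsubst f p = (\<Sum>w\<in>{w. p w \<noteq> 0}. fsmult (p w) (fmono f w))"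

datatype uv = U | V

definition jordan_rel :: "uv list \<Rightarrow> 'k::comm_ring_1" where
  "jordan_rel = fword [V, U] - fword [U, V] - fword [U, U]"

definition jordan_ideal :: "(uv list \<Rightarrow> 'k::comm_ring_1) set" where
  "jordan_ideal = fideal UNIV {jordan_rel}"

text \<open>Elements of k<u,v> whose class lies in the n-th Veronese subring
  \<Oplus>_i k_J[u,v]_{ni} (= invariant ring of 1/n(1,1)): combinations of words of
  length divisible by n.\<close>
definition veronese :: "nat \<Rightarrow> (uv list \<Rightarrow> 'k::comm_ring_1) \<Rightarrow> bool" where
  "veronese n q \<longleftrightarrow> q \<in> falg UNIV \<and> (\<forall>w. q w \<noteq> 0 \<longrightarrow> n dvd length w)"

definition jgen :: "nat \<Rightarrow> nat \<Rightarrow> (uv list \<Rightarrow> 'k::field_char_0)" where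
  "jgen n i = fsmult ((-1) ^ i / fact i) (fword (replicate (n - i) U @ replicate i V))"

definition rel1 :: "nat \<Rightarrow> nat \<Rightarrow> nat \<Rightarrow> (nat list \<Rightarrow> 'k::field_char_0)" where
  "rel1 n i j = (\<Sum>k\<le>j. fsmult (of_nat ((n - i) choose k)) (fword [j - k, i]))
              - (\<Sum>l\<le>i. fsmult (of_nat ((n - j) choose l)) (fword [i - l, j]))"

definition rel2 :: "nat \<Rightarrow> nat \<Rightarrow> nat \<Rightarrow> (nat list \<Rightarrow> 'k::field_char_0)" where
  "rel2 n i j = fsmult (of_nat i) (fword [i, j])
              - fsmult (of_nat (j + 1)) (fword [i - 1, j + 1])
              + fsmult (of_int (int n - 1 - (int j - int i))) (fword [i - 1, j])"

definition relsI :: "nat \<Rightarrow> (nat list \<Rightarrow> 'k::field_char_0) set" where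
  "relsI n = {rel1 n i j | i j. i < j \<and> j \<le> n} \<union> {rel2 n i j | i j. 1 \<le> i \<and> i \<le> j \<and> j < n}"

end

theory Submission
  imports Defs "HOL-Computational_Algebra.Formal_Power_Series"
begin

text \<open>Modulo \<open>vu - uv - u\<^sup>2\<close> every word in \<open>u, v\<close> is a combination of ordered words
  \<open>u\<^sup>a v\<^sup>b\<close> of the same length, and when \<open>n\<close> divides \<open>a + b\<close> such a word is, up to a nonzero
  scalar, the image of the word \<open>X\<^sub>0 \<dots> X\<^sub>0 X\<^sub>c X\<^sub>n \<dots> X\<^sub>n\<close>; this gives surjectivity.
  The Jordan plane acts on the span of the formal powers \<open>x\<^sup>e\<close> by \<open>u = x\<close>, \<open>v = x\<^sup>2 d/dx\<close>.
  The coefficient functionals of this action vanish exactly on the ideal and take rising factorial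
  values on \<open>u\<^sup>a v\<^sup>b\<close>, so the ordered words are independent modulo the ideal, and with
  Vandermonde's identity they show that both families of relations lie in the kernel.
  Conversely the relations rewrite every word in the \<open>X\<^sub>i\<close> into a combination of words
  \<open>X\<^sub>0 \<dots> X\<^sub>0 X\<^sub>c X\<^sub>n \<dots> X\<^sub>n\<close>, whose images are distinct ordered words; hence the kernel is
  generated by the relations.\<close>

section \<open>The free algebra\<close>

lemma sum_fun_apply: "(\<Sum>i\<in>S. f i) x = (\<Sum>i\<in>S. f i x)"
  by (induction S rule: infinite_finite_induct) auto

lemma fword_apply: "fword w v = (if v = w then 1 else 0)"
  by (simp add: fword_def)

lemma fsmult_apply [simp]: "fsmult c p w = c * p w"
  by (simp add: fsmult_def)

definition splits :: "'a list \<Rightarrow> ('a list \<times> 'a list) set" where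
  "splits w = {(a, b). a @ b = w}"

lemma splits_eq_image: "splits w = (\<lambda>i. (take i w, drop i w)) ` {..length w}"
proof
  show "splits w \<subseteq> (\<lambda>i. (take i w, drop i w)) ` {..length w}"
  proof
    fix s assume "s \<in> splits w"
    then obtain a b where "s = (a, b)" "a @ b = w" by (auto simp: splits_def)
    then show "s \<in> (\<lambda>i. (take i w, drop i w)) ` {..length w}"
      by (intro image_eqI[where x = "length a"]) auto
  qed
qed (auto simp: splits_def)

lemma finite_splits [simp]: "finite (splits w)"
  by (simp add: splits_eq_image)

lemma fmul_eq_sum_splits: "fmul p q w = (\<Sum>(a, b)\<in>splits w. p a * q b)"
proof -
  have "inj_on (\<lambda>i. (take i w, drop i w)) {..length w}"
    by (rule inj_onI) (metis Pair_inject atMost_iff length_take min.absorb2)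
  then show ?thesis
    unfolding fmul_def splits_eq_image by (simp add: sum.reindex)
qed

lemma fmul_assoc: "fmul (fmul p q) r = fmul p (fmul q r)"
  for p q r :: "'a list \<Rightarrow> 'k::comm_ring_1"
proof
  fix w :: "'a list"
  let ?T = "{(a, b, c). a @ b @ c = w}"
  let ?g = "\<lambda>(a, b, c). p a * q b * r c"
  have "fmul (fmul p q) r w = (\<Sum>((x, c), (a, b))\<in>Sigma (splits w) (\<lambda>(x, c). splits x). p a * q b * r c)"
    by (simp add: fmul_eq_sum_splits sum_distrib_right sum.Sigma split_def)
  also have "\<dots> = sum ?g ?T"
    by (rule sum.reindex_bij_witness[where i = "\<lambda>(a, b, c). ((a @ b, c), (a, b))"
          and j = "\<lambda>((x, c), (a, b)). (a, b, c)"]) (auto simp: splits_def)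
  also have "\<dots> = (\<Sum>((a, y), (b, c))\<in>Sigma (splits w) (\<lambda>(a, y). splits y). p a * (q b * r c))"
    by (rule sum.reindex_bij_witness[where i = "\<lambda>((a, y), (b, c)). (a, b, c)"
          and j = "\<lambda>(a, b, c). ((a, b @ c), (b, c))"]) (auto simp: splits_def mult.assoc)
  also have "\<dots> = fmul p (fmul q r) w"
    by (simp add: fmul_eq_sum_splits sum_distrib_left sum.Sigma split_def)
  finally show "fmul (fmul p q) r w = fmul p (fmul q r) w" .
qed

lemma fmul_fword: "fmul (fword a) (fword b) = fword (a @ b)"
proof
  fix w
  have "fmul (fword a) (fword b) w = (\<Sum>s\<in>splits w. if s = (a, b) then 1 else 0)"
    unfolding fmul_eq_sum_splits by (intro sum.cong) (auto simp: fword_apply split: if_splits)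
  also have "\<dots> = (if (a, b) \<in> splits w then 1 else 0)"
    by (simp add: sum.delta)
  finally show "fmul (fword a) (fword b) w = fword (a @ b) w"
    by (auto simp: fword_apply splits_def)
qed

lemma fmul_one_left [simp]: "fmul (fword []) p = p"
proof
  fix w
  have "fmul (fword []) p w = (\<Sum>i\<le>length w. if i = 0 then p w else 0)"
    unfolding fmul_def by (intro sum.cong) (auto simp: fword_apply)
  then show "fmul (fword []) p w = p w" by simp
qed

lemma fmul_smult_left: "fmul (fsmult c p) r = fsmult c (fmul p r)"
  by (rule ext) (simp add: fmul_def sum_distrib_left mult.assoc)

lemma fmul_smult_right: "fmul r (fsmult c p) = fsmult c (fmul r p)"
  by (rule ext) (simp add: fmul_def sum_distrib_left mult.left_commute)

lemma fmul_sum_left: "fmul (\<Sum>i\<in>S. f i) r = (\<Sum>i\<in>S. fmul (f i) r)"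
  by (rule ext) (simp add: fmul_def sum_fun_apply sum_distrib_right, rule sum.swap)

lemma fmul_sum_right: "fmul r (\<Sum>i\<in>S. f i) = (\<Sum>i\<in>S. fmul r (f i))"
  by (rule ext) (simp add: fmul_def sum_fun_apply sum_distrib_left, rule sum.swap)

lemma fsmult_add_left: "fsmult (a + b) p = fsmult a p + fsmult b p"
  by (rule ext) (simp add: distrib_right)

lemma fsmult_diff_left: "fsmult (a - b) p = fsmult a p - fsmult b p"
  by (rule ext) (simp add: left_diff_distrib)

lemma fsmult_diff_right: "fsmult c (p - q) = fsmult c p - fsmult c q"
  by (rule ext) (simp add: right_diff_distrib)

lemma fsmult_sum: "fsmult c (\<Sum>i\<in>S. f i) = (\<Sum>i\<in>S. fsmult c (f i))"
  by (rule ext) (simp add: sum_fun_apply sum_distrib_left)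

lemma fsmult_fsmult [simp]: "fsmult c (fsmult d p) = fsmult (c * d) p"
  by (rule ext) (simp add: mult.assoc)

lemma fsmult_one [simp]: "fsmult 1 p = p"
  by (rule ext) simp

lemma fsmult_minus_one: "fsmult (- 1) p = - p"
  by (rule ext) simp

lemma fmul_nonzeroE:
  assumes "fmul p q w \<noteq> 0"
  obtains a b where "w = a @ b" "p a \<noteq> 0" "q b \<noteq> 0"
proof -
  from assms obtain s where "s \<in> splits w" "p (fst s) * q (snd s) \<noteq> 0"
    unfolding fmul_eq_sum_splits split_def by (meson sum.not_neutral_contains_not_neutral)
  then show ?thesis using that by (clarsimp simp: splits_def) (metis mult_zero_left mult_zero_right)
qed

definition fsupport :: "('a list \<Rightarrow> 'k::zero) \<Rightarrow> 'a list set" where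
  "fsupport p = {w. p w \<noteq> 0}"

lemma in_fsupport_iff [simp]: "w \<in> fsupport p \<longleftrightarrow> p w \<noteq> 0"
  by (simp add: fsupport_def)

lemma fsupp_iff_finite_fsupport: "fsupp p \<longleftrightarrow> finite (fsupport p)"
  by (simp add: fsupp_def fsupport_def)

lemma falg_iff: "p \<in> falg A \<longleftrightarrow> finite (fsupport p) \<and> (\<forall>w. p w \<noteq> 0 \<longrightarrow> set w \<subseteq> A)"
  by (simp add: falg_def fsupp_iff_finite_fsupport)

lemma falg_finite_fsupport: "p \<in> falg A \<Longrightarrow> finite (fsupport p)"
  by (simp add: falg_iff)

lemma falg_imp_fsupp: "p \<in> falg A \<Longrightarrow> fsupp p"
  by (simp add: falg_def)

lemma falg_set_subset: "p \<in> falg A \<Longrightarrow> p w \<noteq> 0 \<Longrightarrow> set w \<subseteq> A"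
  by (simp add: falg_iff)

lemma falg_zero: "0 \<in> falg A"
  by (simp add: falg_iff fsupport_def)

lemma falg_fword:
  assumes "set w \<subseteq> A"
  shows "(fword w :: 'a list \<Rightarrow> 'k::comm_ring_1) \<in> falg A"
proof -
  have "fsupport (fword w :: 'a list \<Rightarrow> 'k) = {w}" by (auto simp: fword_apply split: if_splits)
  with assms show ?thesis by (simp add: falg_iff fword_apply)
qed

lemma falg_pointwise:
  assumes "p \<in> falg A" "q \<in> falg A" "\<And>w. h w \<noteq> 0 \<Longrightarrow> p w \<noteq> 0 \<or> q w \<noteq> 0"
  shows "h \<in> falg A"
proof -
  have "fsupport h \<subseteq> fsupport p \<union> fsupport q" using assms(3) by auto
  then show ?thesis using assms unfolding falg_iff by (meson finite_Un finite_subset)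
qed

lemma falg_add: "p \<in> falg A \<Longrightarrow> q \<in> falg A \<Longrightarrow> p + q \<in> falg A"
  for p q :: "'a list \<Rightarrow> 'k::comm_ring_1"
  by (erule falg_pointwise) auto

lemma falg_diff: "p \<in> falg A \<Longrightarrow> q \<in> falg A \<Longrightarrow> p - q \<in> falg A"
  for p q :: "'a list \<Rightarrow> 'k::comm_ring_1"
  by (erule falg_pointwise) auto

lemma falg_smult: "p \<in> falg A \<Longrightarrow> fsmult c p \<in> falg A"
  by (rule falg_pointwise[of p A 0]) (auto simp: falg_zero)

lemma falg_sum:
  fixes f :: "'i \<Rightarrow> 'a list \<Rightarrow> 'k::comm_ring_1"
  shows "finite I \<Longrightarrow> (\<And>i. i \<in> I \<Longrightarrow> f i \<in> falg A) \<Longrightarrow> (\<Sum>i\<in>I. f i) \<in> falg A"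
  by (induction I rule: finite_induct) (auto simp: falg_zero falg_add)

lemma falg_fmul:
  assumes "p \<in> falg A" "q \<in> falg A"
  shows "fmul p q \<in> falg A"
proof -
  have "fsupport (fmul p q) \<subseteq> (\<lambda>(a, b). a @ b) ` (fsupport p \<times> fsupport q)"
    by (force elim!: fmul_nonzeroE)
  then have "finite (fsupport (fmul p q))"
    using assms by (meson falg_finite_fsupport finite_SigmaI finite_imageI finite_subset)
  moreover have "set w \<subseteq> A" if "fmul p q w \<noteq> 0" for w
  proof -
    from that obtain a b where "w = a @ b" "p a \<noteq> 0" "q b \<noteq> 0" by (rule fmul_nonzeroE)
    then show ?thesis using assms by (simp add: falg_set_subset)
  qed
  ultimately show ?thesis by (simp add: falg_iff)
qed

lemma fexpand:
  assumes "fsupp p"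
  shows "p = (\<Sum>w\<in>fsupport p. fsmult (p w) (fword w))"
proof
  fix v
  have "(\<Sum>w\<in>fsupport p. fsmult (p w) (fword w)) v = (\<Sum>w\<in>fsupport p. if v = w then p w else 0)"
    by (simp add: sum_fun_apply fword_apply if_distrib cong: if_cong)
  also have "\<dots> = p v" using assms by (simp add: fsupp_iff_finite_fsupport)
  finally show "p v = (\<Sum>w\<in>fsupport p. fsmult (p w) (fword w)) v" by simp
qed

lemma sum_fsmult_fword_nonzeroE:
  assumes "(\<Sum>i\<in>I. fsmult (c i) (fword (g i))) v \<noteq> 0"
  obtains i where "i \<in> I" "v = g i" "c i \<noteq> 0"
proof -
  from assms obtain i where "i \<in> I" "c i * fword (g i) v \<noteq> 0"
    unfolding sum_fun_apply fsmult_apply by (rule sum.not_neutral_contains_not_neutral)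
  then show ?thesis using that by (auto simp: fword_apply split: if_splits)
qed

section \<open>Substitution homomorphisms and ideals\<close>

lemma fmono_Nil [simp]: "fmono f [] = fword []"
  by (simp add: fmono_def)

lemma fmono_Cons [simp]: "fmono f (a # w) = fmul (f a) (fmono f w)"
  by (simp add: fmono_def)

lemma fmono_append: "fmono f (x @ y) = fmul (fmono f x) (fmono f y)"
  by (induction x) (simp_all add: fmul_assoc)

lemma fmono_scaled_words:
  assumes "\<And>a. f a = fsmult (c a) (fword (g a))"
  shows "fmono f w = fsmult (prod_list (map c w)) (fword (concat (map g w)))"
proof (induction w)
  case (Cons a w)
  have "fmono f (a # w)
      = fmul (fsmult (c a) (fword (g a))) (fsmult (prod_list (map c w)) (fword (concat (map g w))))"
    by (simp only: fmono_Cons assms Cons.IH)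
  then show ?case
    by (simp only: fmul_smult_left fmul_smult_right fmul_fword fsmult_fsmult) (simp add: mult.commute)
qed simp

lemma fsubst_superset:
  assumes "finite S" "fsupport p \<subseteq> S"
  shows "fsubst f p = (\<Sum>w\<in>S. fsmult (p w) (fmono f w))"
  unfolding fsubst_def by (rule sum.mono_neutral_left) (use assms in \<open>auto simp: fsupport_def\<close>)

lemma fsubst_eq_sum: "fsubst f p = (\<Sum>w\<in>fsupport p. fsmult (p w) (fmono f w))"
  by (simp add: fsubst_def fsupport_def)

lemma fsubst_zero [simp]: "fsubst f 0 = 0"
  by (simp add: fsubst_def)

lemma fsubst_add:
  assumes "fsupp p" "fsupp q"
  shows "fsubst f (p + q) = fsubst f p + fsubst f q"
proof -
  let ?S = "fsupport p \<union> fsupport q"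
  have "finite ?S" using assms by (simp add: fsupp_iff_finite_fsupport)
  then show ?thesis
    by (subst (1 2 3) fsubst_superset[where S = ?S]) (auto simp: fsmult_add_left sum.distrib)
qed

lemma fsubst_diff:
  assumes "fsupp p" "fsupp q"
  shows "fsubst f (p - q) = fsubst f p - fsubst f q"
proof -
  let ?S = "fsupport p \<union> fsupport q"
  have "finite ?S" using assms by (simp add: fsupp_iff_finite_fsupport)
  then show ?thesis
    by (subst (1 2 3) fsubst_superset[where S = ?S]) (auto simp: fsmult_diff_left sum_subtractf)
qed

lemma fsubst_smult: "fsupp p \<Longrightarrow> fsubst f (fsmult c p) = fsmult c (fsubst f p)"
  by (subst (1 2) fsubst_superset[where S = "fsupport p"])
     (auto simp: fsupp_iff_finite_fsupport fsmult_sum)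

lemma fsubst_fword: "fsubst f (fword w) = fmono f w"
  by (subst fsubst_superset[where S = "{w}"]) (auto simp: fword_apply split: if_splits)

lemma fsubst_smult_fword: "fsubst f (fsmult c (fword w)) = fsmult c (fmono f w)"
  by (simp add: fsubst_smult fsubst_fword falg_imp_fsupp[OF falg_fword[of w UNIV]])

lemma fsubst_sum:
  fixes g :: "'i \<Rightarrow> 'a list \<Rightarrow> 'k::comm_ring_1"
  assumes "finite I" "\<And>i. i \<in> I \<Longrightarrow> g i \<in> falg A"
  shows "fsubst f (\<Sum>i\<in>I. g i) = (\<Sum>i\<in>I. fsubst f (g i))"
  using assms
proof (induction I rule: finite_induct)
  case (insert x F)
  have split: "fsubst f (g x + sum g F) = fsubst f (g x) + fsubst f (sum g F)"
    using insert.prems insert.hyps by (intro fsubst_add falg_imp_fsupp falg_sum) auto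
  have IH: "fsubst f (sum g F) = (\<Sum>i\<in>F. fsubst f (g i))"
    using insert.IH insert.prems by blast
  show ?case by (simp only: sum.insert[OF insert.hyps] split IH)
qed simp

lemma fmul_eq_sum_products:
  assumes "fsupp p" "fsupp q"
  shows "fmul p q = (\<Sum>x\<in>fsupport p. \<Sum>y\<in>fsupport q. fsmult (p x * q y) (fword (x @ y)))"
  by (subst fexpand[OF assms(1)], subst fexpand[OF assms(2)])
     (simp add: fmul_sum_left fmul_sum_right fmul_smult_left fmul_smult_right fmul_fword
       fsmult_sum mult.commute, rule sum.swap)

lemma fsubst_fmul:
  assumes "fsupp p" "fsupp q"
  shows "fsubst f (fmul p q) = fmul (fsubst f p) (fsubst f q)"
proof -
  have fin: "finite (fsupport p)" "finite (fsupport q)"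
    using assms by (simp_all add: fsupp_iff_finite_fsupport)
  have "fsubst f (fmul p q) = (\<Sum>x\<in>fsupport p. \<Sum>y\<in>fsupport q. fsmult (p x * q y) (fmono f (x @ y)))"
    unfolding fmul_eq_sum_products[OF assms]
    by (simp add: fsubst_sum[where A = UNIV] fin falg_sum falg_smult falg_fword fsubst_smult_fword)
  also have "\<dots> = fmul (fsubst f p) (fsubst f q)"
    by (simp add: fsubst_eq_sum fmul_sum_left fmul_sum_right fmul_smult_left fmul_smult_right
        fmono_append fsmult_sum mult.commute, rule sum.swap)
  finally show ?thesis .
qed

lemma fideal_subset_falg:
  assumes "R \<subseteq> falg A" "x \<in> fideal A R"
  shows "x \<in> falg A"
  using assms(2)
proof induction
  case zero
  show ?case by (rule falg_zero)
next
  case (add a b)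
  from add.IH show ?case by (rule falg_add)
qed (use assms(1) falg_fmul in auto)

lemma fideal_imp_fsupp: "R \<subseteq> falg A \<Longrightarrow> x \<in> fideal A R \<Longrightarrow> fsupp x"
  by (rule falg_imp_fsupp[OF fideal_subset_falg])

lemma fideal_smult: "a \<in> fideal A R \<Longrightarrow> fsmult c a \<in> fideal A R"
  using fideal.lmul[of a A R "fsmult c (fword [])"] by (simp add: falg_smult falg_fword fmul_smult_left)

lemma fideal_diff:
  assumes "a \<in> fideal A R" "b \<in> fideal A R"
  shows "a - b \<in> fideal A R"
  using fideal.add[OF assms(1) fideal_smult[OF assms(2), of "- 1"]] by (simp add: fsmult_minus_one)

lemma fideal_sum:
  "finite I \<Longrightarrow> (\<And>i. i \<in> I \<Longrightarrow> g i \<in> fideal A R) \<Longrightarrow> (\<Sum>i\<in>I. g i) \<in> fideal A R"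
  by (induction I rule: finite_induct) (auto intro: fideal.zero fideal.add)

lemma fsubst_fideal:
  assumes R: "R \<subseteq> falg A"
    and f: "\<And>p. p \<in> falg A \<Longrightarrow> fsubst f p \<in> falg B"
    and gen: "\<And>r. r \<in> R \<Longrightarrow> fsubst f r \<in> fideal B S"
    and x: "x \<in> fideal A R"
  shows "fsubst f x \<in> fideal B S"
  using x
proof induction
  case zero
  show ?case unfolding fsubst_zero by (rule fideal.zero)
next
  case (add a b)
  have "fsubst f (a + b) = fsubst f a + fsubst f b"
    by (intro fsubst_add fideal_imp_fsupp[OF R] add.hyps)
  with add.IH show ?case by (metis fideal.add)
next
  case (lmul a c)
  have "fsubst f (fmul c a) = fmul (fsubst f c) (fsubst f a)"
    by (rule fsubst_fmul) (use lmul.hyps R in \<open>auto intro: fideal_imp_fsupp falg_imp_fsupp\<close>)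
  with lmul.IH lmul.hyps show ?case by (metis f fideal.lmul)
next
  case (rmul a c)
  have "fsubst f (fmul a c) = fmul (fsubst f a) (fsubst f c)"
    by (rule fsubst_fmul) (use rmul.hyps R in \<open>auto intro: fideal_imp_fsupp falg_imp_fsupp\<close>)
  with rmul.IH rmul.hyps show ?case by (metis f fideal.rmul)
qed (rule gen)

section \<open>Rewriting modulo an ideal\<close>

definition fspan :: "'a set \<Rightarrow> ('a list \<Rightarrow> bool) \<Rightarrow> ('a list \<Rightarrow> 'k::comm_ring_1) set" where
  "fspan A N = {y \<in> falg A. \<forall>v. y v \<noteq> 0 \<longrightarrow> N v}"

definition reduces_to ::
  "'a set \<Rightarrow> ('a list \<Rightarrow> 'k::comm_ring_1) set \<Rightarrow> ('a list \<Rightarrow> bool) \<Rightarrow> ('a list \<Rightarrow> 'k) \<Rightarrow> bool" where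
  "reduces_to A R N x \<longleftrightarrow> (\<exists>y \<in> fspan A N. x - y \<in> fideal A R)"

lemma fspan_sum_smult:
  fixes y :: "'i \<Rightarrow> 'a list \<Rightarrow> 'k::comm_ring_1"
  assumes "finite I" "\<And>i. i \<in> I \<Longrightarrow> y i \<in> fspan A N"
  shows "(\<Sum>i\<in>I. fsmult (c i) (y i)) \<in> fspan A N"
proof -
  have "(\<Sum>i\<in>I. fsmult (c i) (y i)) \<in> falg A"
    using assms by (intro falg_sum falg_smult) (auto simp: fspan_def)
  moreover have "N v" if "(\<Sum>i\<in>I. fsmult (c i) (y i)) v \<noteq> 0" for v
  proof -
    from that obtain i where "i \<in> I" "c i * y i v \<noteq> 0"
      unfolding sum_fun_apply fsmult_apply by (rule sum.not_neutral_contains_not_neutral)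
    then have "i \<in> I" "y i v \<noteq> 0" by auto
    then show ?thesis using assms(2) by (auto simp: fspan_def)
  qed
  ultimately show ?thesis by (simp add: fspan_def)
qed

lemma reduces_to_fideal: "x \<in> fideal A R \<Longrightarrow> reduces_to A R N x"
  unfolding reduces_to_def fspan_def by (rule bexI[of _ 0]) (simp_all add: falg_zero)

lemma reduces_to_fword: "set w \<subseteq> A \<Longrightarrow> N w \<Longrightarrow> reduces_to A R N (fword w)"
  unfolding reduces_to_def fspan_def
  by (rule bexI[of _ "fword w"]) (auto simp: falg_fword fideal.zero fword_apply split: if_splits)

lemma reduces_to_mono: "reduces_to A R N x \<Longrightarrow> (\<And>v. N v \<Longrightarrow> N' v) \<Longrightarrow> reduces_to A R N' x"
  unfolding reduces_to_def fspan_def by blast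

lemma reduces_to_sum_smult:
  fixes x :: "'i \<Rightarrow> 'a list \<Rightarrow> 'k::comm_ring_1"
  assumes "finite I" "\<And>i. i \<in> I \<Longrightarrow> reduces_to A R N (x i)"
  shows "reduces_to A R N (\<Sum>i\<in>I. fsmult (c i) (x i))"
proof -
  from assms(2) obtain y where y: "\<And>i. i \<in> I \<Longrightarrow> y i \<in> fspan A N \<and> x i - y i \<in> fideal A R"
    unfolding reduces_to_def by metis
  have "(\<Sum>i\<in>I. fsmult (c i) (x i)) - (\<Sum>i\<in>I. fsmult (c i) (y i))
      = (\<Sum>i\<in>I. fsmult (c i) (x i - y i))"
    by (simp add: fsmult_diff_right sum_subtractf)
  also have "\<dots> \<in> fideal A R"
    using assms(1) y by (intro fideal_sum fideal_smult) auto
  finally show ?thesis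
    unfolding reduces_to_def using assms(1) y by (blast intro: fspan_sum_smult)
qed

lemma reduces_to_diff:
  assumes "reduces_to A R N x" "reduces_to A R N x'"
  shows "reduces_to A R N (x - x')"
proof -
  have "x - x' = (\<Sum>i\<in>{True, False}. fsmult (if i then 1 else - 1) (if i then x else x'))"
    by (simp add: fsmult_minus_one)
  then show ?thesis using assms by (simp only:) (rule reduces_to_sum_smult, auto)
qed

definition rewrite_rule :: "'a set \<Rightarrow> ('a \<Rightarrow> nat) \<Rightarrow> 'a \<Rightarrow> 'a \<Rightarrow> ('a list \<Rightarrow> 'k::comm_ring_1) \<Rightarrow> bool" where
  "rewrite_rule A rank a b r \<longleftrightarrow> r [a, b] = 1 \<and>
     (\<forall>v. r v \<noteq> 0 \<longrightarrow> v = [a, b] \<or> (\<exists>c d. v = [c, d] \<and> c \<in> A \<and> d \<in> A \<and> rank c < rank a))"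

fun word_rank :: "('a \<Rightarrow> nat) \<Rightarrow> nat \<Rightarrow> 'a list \<Rightarrow> nat" where
  "word_rank rank B [] = 0"
| "word_rank rank B (x # w) = rank x * B ^ length w + word_rank rank B w"

lemma word_rank_less_power: "\<forall>x\<in>set w. rank x < B \<Longrightarrow> word_rank rank B w < B ^ length w"
proof (induction w)
  case (Cons x w)
  then have "rank x + 1 \<le> B" "word_rank rank B w < B ^ length w" by auto
  then have "rank x * B ^ length w + word_rank rank B w < (rank x + 1) * B ^ length w" by simp
  also have "\<dots> \<le> B * B ^ length w" using \<open>rank x + 1 \<le> B\<close> by (intro mult_right_mono) auto
  finally show ?case by simp
qed simp

lemma word_rank_append:
  "word_rank rank B (u @ v) = word_rank rank B u * B ^ length v + word_rank rank B v"
  by (induction u) (simp_all add: power_add algebra_simps)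

lemma word_rank_rewrite_less:
  assumes "rank c < rank a" "rank d < B" "\<forall>x\<in>set suf. rank x < B"
  shows "word_rank rank B (pre @ c # d # suf) < word_rank rank B (pre @ a # b # suf)"
proof -
  let ?L = "length suf"
  have "rank d * B ^ ?L + word_rank rank B suf < (rank d + 1) * B ^ ?L"
    using word_rank_less_power[OF assms(3)] by simp
  also have "\<dots> \<le> B * B ^ ?L" using assms(2) by (intro mult_right_mono) auto
  finally have "word_rank rank B (c # d # suf) < (rank c + 1) * B ^ Suc ?L" by simp
  also have "\<dots> \<le> rank a * B ^ Suc ?L" using assms(1) by (intro mult_right_mono) auto
  also have "\<dots> \<le> word_rank rank B (a # b # suf)" by simp
  finally show ?thesis by (simp add: word_rank_append)
qed

lemma not_successively_split:
  "\<not> successively P w \<Longrightarrow> \<exists>pre a b suf. w = pre @ a # b # suf \<and> \<not> P a b"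
proof (induction P w rule: successively.induct)
  case (3 P x y w)
  then show ?case by (cases "P x y") (auto, metis append_Cons, metis append_Nil)
qed simp_all

lemma fmul_fword_sandwich:
  assumes "fsupp r"
  shows "fmul (fword pre) (fmul r (fword suf)) = (\<Sum>v\<in>fsupport r. fsmult (r v) (fword (pre @ v @ suf)))"
  by (subst fexpand[OF assms])
     (simp add: fmul_sum_left fmul_sum_right fmul_smult_left fmul_smult_right fmul_fword)

lemma rewrite_rule_fword_in_fideal:
  assumes R: "R \<subseteq> falg A" and r: "r \<in> fideal A R" "rewrite_rule A rank a b r"
    and "set pre \<subseteq> A" "set suf \<subseteq> A"
  shows "fword (pre @ a # b # suf) + (\<Sum>v\<in>fsupport r - {[a, b]}. fsmult (r v) (fword (pre @ v @ suf)))
    \<in> fideal A R"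
proof -
  have fin: "finite (fsupport r)" using fideal_subset_falg[OF R r(1)] by (rule falg_finite_fsupport)
  have ab: "[a, b] \<in> fsupport r" using r(2) by (simp add: rewrite_rule_def)
  have "fmul (fword pre) (fmul r (fword suf))
      = fword (pre @ a # b # suf) + (\<Sum>v\<in>fsupport r - {[a, b]}. fsmult (r v) (fword (pre @ v @ suf)))"
    unfolding fmul_fword_sandwich[OF fideal_imp_fsupp[OF R r(1)]] sum.remove[OF fin ab]
    using r(2) by (simp add: rewrite_rule_def)
  moreover have "fmul (fword pre) (fmul r (fword suf)) \<in> fideal A R"
    using assms by (intro fideal.lmul fideal.rmul falg_fword r(1))
  ultimately show ?thesis by simp
qed

lemma fword_reduces_to_normal:
  fixes R :: "('a list \<Rightarrow> 'k::comm_ring_1) set"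
  assumes R: "R \<subseteq> falg A"
    and rank: "\<forall>x\<in>A. rank x < B"
    and rules: "\<And>a b. a \<in> A \<Longrightarrow> b \<in> A \<Longrightarrow> \<not> P a b \<Longrightarrow> \<exists>r \<in> fideal A R. rewrite_rule A rank a b r"
    and w: "set w \<subseteq> A"
  shows "reduces_to A R (\<lambda>v. successively P v \<and> length v = length w) (fword w)"
  using w
proof (induction "word_rank rank B w" arbitrary: w rule: less_induct)
  case less
  show ?case
  proof (cases "successively P w")
    case True
    then show ?thesis using less.prems by (intro reduces_to_fword) auto
  next
    case False
    then obtain pre a b suf where w: "w = pre @ a # b # suf" and ab: "\<not> P a b"
      using not_successively_split by blast
    have A: "a \<in> A" "b \<in> A" "set pre \<subseteq> A" "set suf \<subseteq> A" using less.prems w by auto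
    obtain r where r: "r \<in> fideal A R" "rewrite_rule A rank a b r"
      using rules[OF A(1,2) ab] by blast
    define S where "S = fsupport r - {[a, b]}"
    have fin: "finite S"
      using fideal_subset_falg[OF R r(1)] by (simp add: S_def falg_finite_fsupport)
    have IH: "reduces_to A R (\<lambda>u. successively P u \<and> length u = length w) (fword (pre @ v @ suf))"
      if v: "v \<in> S" for v
    proof -
      obtain c d where cd: "v = [c, d]" "c \<in> A" "d \<in> A" "rank c < rank a"
        using v r(2) by (auto simp: S_def rewrite_rule_def)
      then have "word_rank rank B (pre @ v @ suf) < word_rank rank B w"
        using w rank A by (simp add: word_rank_rewrite_less subset_iff)
      moreover have "set (pre @ v @ suf) \<subseteq> A" using cd A by auto
      moreover have "length (pre @ v @ suf) = length w" using cd w by simp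
      ultimately show ?thesis using less.hyps by metis
    qed
    let ?x = "fword w + (\<Sum>v\<in>S. fsmult (r v) (fword (pre @ v @ suf)))"
    have x: "?x \<in> fideal A R"
      unfolding S_def w by (rule rewrite_rule_fword_in_fideal[OF R r A(3,4)])
    have "reduces_to A R (\<lambda>u. successively P u \<and> length u = length w)
        (?x - (\<Sum>v\<in>S. fsmult (r v) (fword (pre @ v @ suf))))"
      by (rule reduces_to_diff[OF reduces_to_fideal[OF x] reduces_to_sum_smult[OF fin IH]])
    then show ?thesis by (simp only: add_diff_cancel)
  qed
qed

lemma falg_reduces_to_normal:
  fixes R :: "('a list \<Rightarrow> 'k::comm_ring_1) set"
  assumes R: "R \<subseteq> falg A"
    and rank: "\<forall>x\<in>A. rank x < B"
    and rules: "\<And>a b. a \<in> A \<Longrightarrow> b \<in> A \<Longrightarrow> \<not> P a b \<Longrightarrow> \<exists>r \<in> fideal A R. rewrite_rule A rank a b r"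
    and p: "p \<in> falg A"
  shows "reduces_to A R (\<lambda>v. successively P v \<and> (\<exists>u. p u \<noteq> 0 \<and> length u = length v)) p"
proof -
  have "reduces_to A R (\<lambda>v. successively P v \<and> (\<exists>u. p u \<noteq> 0 \<and> length u = length v)) (fword u)"
    if "u \<in> fsupport p" for u
    using that p
    by (intro reduces_to_mono[OF fword_reduces_to_normal[OF R rank rules]]) (auto simp: falg_iff)
  then show ?thesis
    using falg_finite_fsupport[OF p] by (subst fexpand[OF falg_imp_fsupp[OF p]]) (rule reduces_to_sum_smult)
qed

section \<open>The Jordan plane\<close>

definition uv_word :: "nat \<Rightarrow> nat \<Rightarrow> uv list" where
  "uv_word a b = replicate a U @ replicate b V"

lemma length_uv_word [simp]: "length (uv_word a b) = a + b"
  by (simp add: uv_word_def)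

lemma uv_word_inject: "uv_word a b = uv_word a' b' \<longleftrightarrow> a = a' \<and> b = b'"
proof
  assume eq: "uv_word a b = uv_word a' b'"
  have "length (filter (\<lambda>x. x = V) (uv_word a b)) = b" for a b
    by (simp add: uv_word_def filter_replicate)
  then have "b = b'" using eq by metis
  moreover have "a + b = a' + b'" using arg_cong[OF eq, of length] by simp
  ultimately show "a = a' \<and> b = b'" by simp
qed simp

definition jordan_ordered :: "uv \<Rightarrow> uv \<Rightarrow> bool" where
  "jordan_ordered x y \<longleftrightarrow> \<not> (x = V \<and> y = U)"

fun uv_rank :: "uv \<Rightarrow> nat" where
  "uv_rank U = 0"
| "uv_rank V = 1"

lemma successively_jordan_ordered_imp_uv_word:
  "successively jordan_ordered w \<Longrightarrow> \<exists>a b. w = uv_word a b"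
proof (induction w)
  case Nil
  have "[] = uv_word 0 0" by (simp add: uv_word_def)
  then show ?case by blast
next
  case (Cons x w)
  then obtain a b where w: "w = uv_word a b" by (auto simp: successively_Cons)
  show ?case
  proof (cases x)
    case U
    then show ?thesis using w by (intro exI[of _ "Suc a"] exI[of _ b]) (simp add: uv_word_def)
  next
    case V
    with Cons.prems w have "a = 0"
      by (cases a) (auto simp: uv_word_def jordan_ordered_def successively_Cons)
    with V w show ?thesis by (intro exI[of _ 0] exI[of _ "Suc b"]) (simp add: uv_word_def)
  qed
qed

lemma jordan_rel_rewrite_rule: "rewrite_rule UNIV uv_rank V U jordan_rel"
  unfolding rewrite_rule_def jordan_rel_def by (auto simp: fword_apply)

lemma jordan_reduces_to_uv_words:
  fixes q :: "uv list \<Rightarrow> 'k::comm_ring_1"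
  assumes "q \<in> falg UNIV"
  shows "reduces_to UNIV {jordan_rel}
           (\<lambda>v. (\<exists>a b. v = uv_word a b) \<and> (\<exists>u. q u \<noteq> 0 \<and> length u = length v)) q"
proof (rule reduces_to_mono[OF falg_reduces_to_normal[where B = 2]])
  show "{jordan_rel :: uv list \<Rightarrow> 'k} \<subseteq> falg UNIV"
    unfolding jordan_rel_def by (simp add: falg_diff falg_fword)
  show "\<forall>x\<in>UNIV. uv_rank x < 2"
  proof
    fix x show "uv_rank x < 2" by (cases x) simp_all
  qed
  show "\<exists>r \<in> fideal UNIV {jordan_rel :: uv list \<Rightarrow> 'k}. rewrite_rule UNIV uv_rank a b r"
    if "\<not> jordan_ordered a b" for a b
    using that jordan_rel_rewrite_rule fideal.gen[of jordan_rel "{jordan_rel}"]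
    by (auto simp: jordan_ordered_def)
qed (use assms successively_jordan_ordered_imp_uv_word in auto)

text \<open>In the action \<open>u = x\<close>, \<open>v = x\<^sup>2 d/dx\<close> on the formal powers \<open>x\<^sup>e\<close> (\<open>e \<in> k\<close>),
  a word \<open>w\<close> sends \<open>x\<^sup>e\<close> to \<open>jordan_weight w e\<close> times \<open>x^(e + length w)\<close>, and
  \<open>jordan_functional q e d\<close> is the coefficient of \<open>x^(e + d)\<close> in \<open>q\<close> applied to \<open>x\<^sup>e\<close>.\<close>

fun jordan_weight :: "uv list \<Rightarrow> 'k::comm_ring_1 \<Rightarrow> 'k" where
  "jordan_weight [] e = 1"
| "jordan_weight (U # w) e = jordan_weight w e"
| "jordan_weight (V # w) e = (e + of_nat (length w)) * jordan_weight w e"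

definition jordan_functional :: "(uv list \<Rightarrow> 'k::comm_ring_1) \<Rightarrow> 'k \<Rightarrow> nat \<Rightarrow> 'k" where
  "jordan_functional q e d = (\<Sum>w\<in>{w. length w = d}. q w * jordan_weight w e)"

lemma finite_uv_words_length: "finite {w :: uv list. length w = d}"
proof -
  have "(UNIV :: uv set) = {U, V}" using uv.exhaust by auto
  then have "{w :: uv list. length w = d} = {w. set w \<subseteq> {U, V} \<and> length w = d}" by auto
  then show ?thesis by (simp add: finite_lists_length_eq)
qed

lemma jordan_weight_append:
  "jordan_weight (x @ y) e = jordan_weight x (e + of_nat (length y)) * jordan_weight y e"
proof (induction x)
  case (Cons a x)
  then show ?case by (cases a) (simp_all add: algebra_simps)
qed simp

lemma jordan_weight_uv_word: "jordan_weight (uv_word a b) e = pochhammer e b"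
proof -
  have "jordan_weight (replicate a U @ z) e = jordan_weight z e" for z
    by (induction a) simp_all
  moreover have "jordan_weight (replicate b V) e = pochhammer e b"
    by (induction b) (simp_all add: pochhammer_Suc mult.commute)
  ultimately show ?thesis by (simp add: uv_word_def)
qed

lemma jordan_functional_add: "jordan_functional (p + q) e d = jordan_functional p e d + jordan_functional q e d"
  by (simp add: jordan_functional_def distrib_right sum.distrib)

lemma jordan_functional_diff: "jordan_functional (p - q) e d = jordan_functional p e d - jordan_functional q e d"
  by (simp add: jordan_functional_def left_diff_distrib sum_subtractf)

lemma jordan_functional_smult: "jordan_functional (fsmult c p) e d = c * jordan_functional p e d"
  by (simp add: jordan_functional_def sum_distrib_left mult.assoc)

lemma jordan_functional_sum: "jordan_functional (\<Sum>i\<in>I. f i) e d = (\<Sum>i\<in>I. jordan_functional (f i) e d)"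
  by (simp add: jordan_functional_def sum_fun_apply sum_distrib_right, rule sum.swap)

lemma jordan_functional_fword:
  "jordan_functional (fword w) e d = (if length w = d then jordan_weight w e else 0)"
proof -
  have "jordan_functional (fword w) e d
      = (\<Sum>v\<in>{w. length w = d}. if v = w then jordan_weight w e else 0)"
    unfolding jordan_functional_def by (intro sum.cong) (auto simp: fword_apply)
  then show ?thesis by (simp add: sum.delta[OF finite_uv_words_length])
qed

lemma jordan_functional_fmul:
  "jordan_functional (fmul p q) e d
     = (\<Sum>j\<le>d. jordan_functional p (e + of_nat j) (d - j) * jordan_functional q e j)"
proof -
  let ?L = "\<lambda>d. {w :: uv list. length w = d}"
  let ?h = "\<lambda>(s, t). p s * q t * (jordan_weight s (e + of_nat (length t)) * jordan_weight t e)"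
  have "jordan_functional (fmul p q) e d = (\<Sum>w\<in>?L d. \<Sum>(s, t)\<in>splits w. ?h (s, t))"
    unfolding jordan_functional_def fmul_eq_sum_splits sum_distrib_right
    by (intro sum.cong) (auto simp: splits_def jordan_weight_append)
  also have "\<dots> = (\<Sum>(w, (s, t))\<in>Sigma (?L d) splits. ?h (s, t))"
    by (subst sum.Sigma) (auto simp: finite_uv_words_length)
  also have "\<dots> = (\<Sum>(s, t)\<in>{(s, t). length s + length t = d}. ?h (s, t))"
    by (rule sum.reindex_bij_witness[where i = "\<lambda>(s, t). (s @ t, (s, t))" and j = "\<lambda>(w, st). st"])
       (auto simp: splits_def)
  also have "\<dots> = (\<Sum>(j, (s, t))\<in>Sigma {..d} (\<lambda>j. ?L (d - j) \<times> ?L j). ?h (s, t))"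
    by (rule sum.reindex_bij_witness[where i = "\<lambda>(j, st). st" and j = "\<lambda>(s, t). (length t, (s, t))"])
       auto
  also have "\<dots> = (\<Sum>j\<le>d. \<Sum>(s, t)\<in>?L (d - j) \<times> ?L j. ?h (s, t))"
    by (simp add: sum.Sigma finite_uv_words_length)
  also have "\<dots> = (\<Sum>j\<le>d. jordan_functional p (e + of_nat j) (d - j) * jordan_functional q e j)"
    unfolding jordan_functional_def sum_product sum.cartesian_product
    by (intro sum.cong) (auto simp: mult_ac)
  finally show ?thesis .
qed

lemma jordan_functional_jordan_rel: "jordan_functional jordan_rel e d = 0"
  by (simp add: jordan_rel_def jordan_functional_diff jordan_functional_fword)

lemma jordan_functional_jordan_ideal:
  assumes "q \<in> jordan_ideal"
  shows "jordan_functional q e d = 0"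
proof -
  have "q \<in> fideal UNIV {jordan_rel}" using assms by (simp add: jordan_ideal_def)
  then have "\<forall>e d. jordan_functional q e d = 0"
  proof induction
    case (gen r)
    then have "r = jordan_rel" by simp
    then show ?case using jordan_functional_jordan_rel by blast
  next
    case zero
    then show ?case by (simp add: jordan_functional_def)
  next
    case (add a b)
    then show ?case unfolding jordan_functional_add by simp
  qed (simp_all add: jordan_functional_fmul)
  then show ?thesis by blast
qed

lemma jordan_functional_uv_words:
  assumes "\<And>v. q v \<noteq> 0 \<Longrightarrow> \<exists>a b. v = uv_word a b"
  shows "jordan_functional q e d = (\<Sum>b\<le>d. q (uv_word (d - b) b) * pochhammer e b)"
proof -
  let ?f = "\<lambda>b. uv_word (d - b) b"
  have inj: "inj_on ?f {..d}"
    by (rule inj_onI) (simp add: uv_word_inject)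
  have "jordan_functional q e d = (\<Sum>w\<in>?f ` {..d}. q w * jordan_weight w e)"
    unfolding jordan_functional_def
  proof (rule sum.mono_neutral_right[OF finite_uv_words_length])
    show "\<forall>w\<in>{w. length w = d} - ?f ` {..d}. q w * jordan_weight w e = 0"
    proof
      fix w assume w: "w \<in> {w. length w = d} - ?f ` {..d}"
      show "q w * jordan_weight w e = 0"
      proof (cases "q w = 0")
        case False
        with assms obtain a b where "w = uv_word a b" by blast
        with w have "w \<in> ?f ` {..d}" by (auto intro!: image_eqI[of _ _ b])
        with w show ?thesis by blast
      qed simp
    qed
  qed auto
  then show ?thesis by (simp add: sum.reindex[OF inj] jordan_weight_uv_word)
qed

lemma pochhammer_combination_eq_0:
  fixes c :: "nat \<Rightarrow> 'k::field_char_0"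
  assumes "\<And>e. (\<Sum>b\<le>d. c b * pochhammer e b) = 0" "m \<le> d"
  shows "c m = 0"
  using assms(2)
proof (induction m rule: less_induct)
  case (less m)
  let ?e = "- of_nat m :: 'k"
  have "(\<Sum>b\<in>{..d} - {m}. c b * pochhammer ?e b) = 0"
  proof (rule sum.neutral, rule ballI)
    fix b assume b: "b \<in> {..d} - {m}"
    show "c b * pochhammer ?e b = 0"
    proof (cases "b < m")
      case True
      then show ?thesis using less.IH[of b] less.prems by simp
    next
      case False
      then have "pochhammer ?e b = 0" using b by (auto simp: pochhammer_eq_0_iff)
      then show ?thesis by simp
    qed
  qed
  then have "c m * pochhammer ?e m = 0"
    using assms(1)[of ?e] less.prems by (simp add: sum.remove[of _ m])
  moreover have "pochhammer ?e m \<noteq> 0" by (auto simp: pochhammer_eq_0_iff)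
  ultimately show ?case by simp
qed

lemma uv_word_combination_eq_0:
  fixes q :: "uv list \<Rightarrow> 'k::field_char_0"
  assumes normal: "\<And>v. q v \<noteq> 0 \<Longrightarrow> \<exists>a b. v = uv_word a b"
    and vanish: "\<And>e d. jordan_functional q e d = 0"
  shows "q = 0"
proof
  fix v
  show "q v = 0 v"
  proof (rule ccontr)
    assume "q v \<noteq> 0 v"
    then obtain a b where v: "v = uv_word a b" using normal[of v] by auto
    have "(\<Sum>i\<le>a + b. q (uv_word (a + b - i) i) * pochhammer e i) = 0" for e
      using vanish[of e "a + b"] jordan_functional_uv_words[of q e "a + b", OF normal] by simp
    then have "q (uv_word (a + b - b) b) = 0"
      by (rule pochhammer_combination_eq_0) simp
    with \<open>q v \<noteq> 0 v\<close> v show False by simp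
  qed
qed

lemma jordan_ideal_iff_functionals_vanish:
  fixes q :: "uv list \<Rightarrow> 'k::field_char_0"
  assumes "q \<in> falg UNIV"
  shows "q \<in> jordan_ideal \<longleftrightarrow> (\<forall>e d. jordan_functional q e d = 0)"
proof
  assume "\<forall>e d. jordan_functional q e d = 0"
  obtain q' where q': "q' \<in> fspan UNIV (\<lambda>v. \<exists>a b. v = uv_word a b)" "q - q' \<in> jordan_ideal"
    using jordan_reduces_to_uv_words[OF assms]
    unfolding reduces_to_def jordan_ideal_def fspan_def by blast
  have "jordan_functional q' e d = 0" for e d
    using \<open>\<forall>e d. jordan_functional q e d = 0\<close> jordan_functional_jordan_ideal[OF q'(2)]
    by (simp add: jordan_functional_diff)
  then have "q' = 0" using q'(1) by (intro uv_word_combination_eq_0) (auto simp: fspan_def)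
  with q'(2) show "q \<in> jordan_ideal" by simp
qed (use jordan_functional_jordan_ideal in blast)

section \<open>The generators and the relations\<close>

definition jgen_coeff :: "nat \<Rightarrow> 'k::field_char_0" where
  "jgen_coeff a = (- 1) ^ a / fact a"

definition xblocks :: "nat \<Rightarrow> nat list \<Rightarrow> uv list" where
  "xblocks n w = concat (map (\<lambda>a. uv_word (n - a) a) w)"

lemma jgen_eq: "jgen n a = fsmult (jgen_coeff a) (fword (uv_word (n - a) a))"
  by (simp add: jgen_def jgen_coeff_def uv_word_def)

lemma fmono_jgen: "fmono (jgen n) w = fsmult (prod_list (map jgen_coeff w)) (fword (xblocks n w))"
  unfolding xblocks_def by (rule fmono_scaled_words) (rule jgen_eq)

lemma prod_list_jgen_coeff_nonzero: "prod_list (map jgen_coeff w) \<noteq> (0 :: 'k::field_char_0)"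
  by (induction w) (simp_all add: jgen_coeff_def)

lemma length_xblocks: "set w \<subseteq> {..n} \<Longrightarrow> length (xblocks n w) = n * length w"
  by (induction w) (auto simp: xblocks_def)

lemma fsubst_jgen_falg: "fsubst (jgen n) p \<in> falg UNIV"
  unfolding fsubst_def fmono_jgen
  by (cases "finite {w. p w \<noteq> 0}") (auto intro!: falg_sum falg_smult falg_fword simp: falg_zero)

lemma jgen_coeff_mult_pochhammer: "jgen_coeff a * pochhammer x a = ((- x) gchoose a)"
  by (simp add: gbinomial_pochhammer jgen_coeff_def)

lemma jordan_functional_jgen_pair:
  assumes "a \<le> n" "b \<le> n"
  shows "jordan_functional (fmono (jgen n) [a, b]) e d
    = (if d = n + n then ((- e - of_nat n) gchoose a) * ((- e) gchoose b) else 0)"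
proof -
  have "jgen_coeff a * jgen_coeff b * (pochhammer (e + of_nat n) a * pochhammer e b)
      = (jgen_coeff a * pochhammer (e + of_nat n) a) * (jgen_coeff b * pochhammer e b)"
    by (simp add: mult_ac)
  then show ?thesis
    using assms unfolding fmono_jgen xblocks_def
    by (simp add: jordan_functional_smult jordan_functional_fword jordan_weight_append
        jordan_weight_uv_word jgen_coeff_mult_pochhammer)
qed

lemma gbinomial_product_commute:
  fixes x :: "'k::field_char_0"
  shows "(x gchoose i) * ((x - of_nat i) gchoose j) = (x gchoose j) * ((x - of_nat j) gchoose i)"
proof -
  have "(x gchoose i) * ((x - of_nat i) gchoose j) = (x gchoose (i + j)) * of_nat ((i + j) choose i)"
    using gbinomial_trinomial_revision[of i "i + j" x] by (simp add: binomial_gbinomial)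
  also have "\<dots> = (x gchoose j) * ((x - of_nat j) gchoose i)"
    using gbinomial_trinomial_revision[of j "i + j" x] binomial_symmetric[of i "i + j"]
    by (simp add: binomial_gbinomial add.commute)
  finally show ?thesis .
qed

lemma rel1_identity:
  fixes e :: "'k::field_char_0"
  assumes "i \<le> n" "j \<le> n"
  shows "(\<Sum>k\<le>j. of_nat ((n - i) choose k) * (((- e - of_nat n) gchoose (j - k)) * ((- e) gchoose i)))
       = (\<Sum>l\<le>i. of_nat ((n - j) choose l) * (((- e - of_nat n) gchoose (i - l)) * ((- e) gchoose j)))"
proof -
  have vandermonde: "(\<Sum>k\<le>b. of_nat ((n - a) choose k) * ((- e - of_nat n) gchoose (b - k)))
      = (- e - of_nat a) gchoose b" if "a \<le> n" for a b
  proof -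
    have "(\<Sum>k\<le>b. of_nat ((n - a) choose k) * ((- e - of_nat n) gchoose (b - k)))
        = (of_nat (n - a) + (- e - of_nat n)) gchoose b"
      using gbinomial_Vandermonde[of "of_nat (n - a)" "- e - of_nat n" b]
      by (simp add: binomial_gbinomial atLeast0AtMost)
    also have "of_nat (n - a) + (- e - of_nat n) = - e - of_nat a"
      using that by (simp add: of_nat_diff)
    finally show ?thesis .
  qed
  show ?thesis
    unfolding mult.assoc[symmetric] sum_distrib_right[symmetric]
      vandermonde[OF assms(1)] vandermonde[OF assms(2)]
    using gbinomial_product_commute[of "- e" i j] by (simp add: mult.commute)
qed

lemma rel2_identity:
  fixes e :: "'k::field_char_0"
  shows "of_nat (Suc i) * (((- e - of_nat n) gchoose Suc i) * ((- e) gchoose j))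
       - of_nat (Suc j) * (((- e - of_nat n) gchoose i) * ((- e) gchoose Suc j))
       + of_int (int n - 1 - (int j - int (Suc i))) * (((- e - of_nat n) gchoose i) * ((- e) gchoose j))
       = 0"
proof -
  let ?y = "- e - of_nat n"
  have Suc_i: "of_nat (Suc i) * (?y gchoose Suc i) = (?y - of_nat i) * (?y gchoose i)"
    using gbinomial_mult_1[of ?y i] by (simp add: algebra_simps)
  have Suc_j: "of_nat (Suc j) * ((- e) gchoose Suc j) = (- e - of_nat j) * ((- e) gchoose j)"
    using gbinomial_mult_1[of "- e" j] by (simp add: algebra_simps)
  have "of_nat (Suc i) * ((?y gchoose Suc i) * ((- e) gchoose j))
       - of_nat (Suc j) * ((?y gchoose i) * ((- e) gchoose Suc j))
       + of_int (int n - 1 - (int j - int (Suc i))) * ((?y gchoose i) * ((- e) gchoose j))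
     = (of_nat (Suc i) * (?y gchoose Suc i)) * ((- e) gchoose j)
       - (of_nat (Suc j) * ((- e) gchoose Suc j)) * (?y gchoose i)
       + of_int (int n - 1 - (int j - int (Suc i))) * ((?y gchoose i) * ((- e) gchoose j))"
    by (simp only: mult_ac)
  also have "\<dots> = 0"
    unfolding Suc_i Suc_j by (simp add: algebra_simps)
  finally show ?thesis .
qed

lemma fsubst_jgen_rel1:
  "fsubst (jgen n) (rel1 n i j) =
     (\<Sum>k\<le>j. fsmult (of_nat ((n - i) choose k)) (fmono (jgen n) [j - k, i]))
   - (\<Sum>l\<le>i. fsmult (of_nat ((n - j) choose l)) (fmono (jgen n) [i - l, j]))"
  unfolding rel1_def
  by (subst fsubst_diff)
     (auto intro!: falg_imp_fsupp[where A = UNIV] falg_sum falg_smult falg_fword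
       simp: fsubst_sum[where A = UNIV] falg_smult falg_fword fsubst_smult_fword)

lemma fsubst_jgen_rel2:
  "fsubst (jgen n) (rel2 n i j) =
     fsmult (of_nat i) (fmono (jgen n) [i, j])
   - fsmult (of_nat (j + 1)) (fmono (jgen n) [i - 1, j + 1])
   + fsmult (of_int (int n - 1 - (int j - int i))) (fmono (jgen n) [i - 1, j])"
  unfolding rel2_def
  by (simp add: fsubst_add fsubst_diff falg_imp_fsupp[where A = UNIV] falg_add falg_diff
      falg_smult falg_fword fsubst_smult_fword)

lemma jordan_functional_rel1:
  assumes "i < j" "j \<le> n"
  shows "jordan_functional (fsubst (jgen n) (rel1 n i j)) e d = 0"
proof (cases "d = n + n")
  case True
  then show ?thesis
    using assms rel1_identity[of i n j e]
    by (simp add: fsubst_jgen_rel1 jordan_functional_diff jordan_functional_sum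
        jordan_functional_smult jordan_functional_jgen_pair del: fmono_Cons)
next
  case False
  then show ?thesis
    using assms
    by (simp add: fsubst_jgen_rel1 jordan_functional_diff jordan_functional_sum
        jordan_functional_smult jordan_functional_jgen_pair del: fmono_Cons)
qed

lemma jordan_functional_rel2:
  assumes "1 \<le> i" "i \<le> j" "j < n"
  shows "jordan_functional (fsubst (jgen n) (rel2 n i j)) e d = 0"
proof -
  obtain i' where i: "i = Suc i'" using assms(1) by (cases i) auto
  show ?thesis
  proof (cases "d = n + n")
    case True
    then show ?thesis
      using assms rel2_identity[of i' e n j] unfolding i
      by (simp add: fsubst_jgen_rel2 jordan_functional_add jordan_functional_diff
          jordan_functional_smult jordan_functional_jgen_pair del: fmono_Cons)
  next
    case False
    then show ?thesis
      using assms unfolding i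
      by (simp add: fsubst_jgen_rel2 jordan_functional_add jordan_functional_diff
          jordan_functional_smult jordan_functional_jgen_pair del: fmono_Cons)
  qed
qed

lemma relsI_subset_falg: "relsI n \<subseteq> (falg {..n} :: (nat list \<Rightarrow> 'k::field_char_0) set)"
  unfolding relsI_def rel1_def rel2_def
  by (auto intro!: falg_add falg_diff falg_sum falg_smult falg_fword)

lemma fsubst_jgen_relsI: "r \<in> relsI n \<Longrightarrow> fsubst (jgen n) r \<in> jordan_ideal"
  unfolding jordan_ideal_iff_functionals_vanish[OF fsubst_jgen_falg] relsI_def
  using jordan_functional_rel1 jordan_functional_rel2 by blast

lemma fsubst_jgen_fideal:
  "p \<in> fideal {..n} (relsI n) \<Longrightarrow> fsubst (jgen n) p \<in> (jordan_ideal :: (uv list \<Rightarrow> 'k::field_char_0) set)"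
  unfolding jordan_ideal_def
  by (rule fsubst_fideal[OF relsI_subset_falg fsubst_jgen_falg fsubst_jgen_relsI[unfolded jordan_ideal_def]])

section \<open>Normal words in the generators\<close>

text \<open>The words in which every adjacent pair is \<open>x_ordered\<close> are \<open>X\<^sub>0 \<dots> X\<^sub>0 X\<^sub>c X\<^sub>n \<dots> X\<^sub>n\<close>;
  such a word is determined by its length and its index sum, which also determine its image.\<close>

definition x_ordered :: "nat \<Rightarrow> nat \<Rightarrow> nat \<Rightarrow> bool" where
  "x_ordered n a b \<longleftrightarrow> a \<le> b \<and> (a = 0 \<or> b = n)"

lemma sum_list_le_mult_length: "set w \<subseteq> {..n} \<Longrightarrow> sum_list w \<le> n * length w"
  by (induction w) auto

lemma successively_x_ordered_positive:
  "successively (x_ordered n) (x # w) \<Longrightarrow> 0 < x \<Longrightarrow> \<exists>k. w = replicate k n"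
proof (induction w arbitrary: x)
  case (Cons y w)
  then have "y = n" "0 < y" by (auto simp: x_ordered_def)
  moreover obtain k where "w = replicate k n" using Cons.prems Cons.IH[of y] \<open>0 < y\<close> by auto
  ultimately have "y # w = replicate (Suc k) n" by simp
  then show ?case by blast
qed simp

lemma successively_x_ordered_replicate: "successively (x_ordered n) (replicate k n)"
  by (induction k rule: induct_nat_012) (auto simp: x_ordered_def)

lemma xblocks_normal:
  assumes "successively (x_ordered n) w" "set w \<subseteq> {..n}"
  shows "xblocks n w = uv_word (n * length w - sum_list w) (sum_list w)"
  using assms
proof (induction w)
  case Nil
  then show ?case by (simp add: xblocks_def uv_word_def)
next
  case (Cons x w)
  have "successively (x_ordered n) w" using Cons.prems(1) by (cases w) auto
  with Cons have IH: "xblocks n w = uv_word (n * length w - sum_list w) (sum_list w)" by simp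
  show ?case
  proof (cases "x = 0")
    case True
    have "sum_list w \<le> n * length w" using Cons.prems(2) by (intro sum_list_le_mult_length) auto
    with True IH show ?thesis by (simp add: xblocks_def uv_word_def replicate_add[symmetric])
  next
    case False
    then obtain k where w: "w = replicate k n"
      using Cons.prems(1) successively_x_ordered_positive by blast
    have "xblocks n (replicate k n) = replicate (n * k) V"
      by (induction k) (simp_all add: xblocks_def uv_word_def replicate_add)
    with w Cons.prems(2) show ?thesis
      by (simp add: xblocks_def uv_word_def replicate_add sum_list_replicate)
  qed
qed

fun x_normal_word :: "nat \<Rightarrow> nat \<Rightarrow> nat \<Rightarrow> nat list" where
  "x_normal_word n 0 s = []"
| "x_normal_word n (Suc k) s =
     (if s \<le> k * n then 0 # x_normal_word n k s else (s - k * n) # replicate k n)"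

lemma x_normal_word_unique:
  assumes "successively (x_ordered n) w" "set w \<subseteq> {..n}"
  shows "w = x_normal_word n (length w) (sum_list w)"
  using assms
proof (induction w)
  case (Cons x w)
  have "successively (x_ordered n) w" using Cons.prems(1) by (cases w) auto
  with Cons have IH: "w = x_normal_word n (length w) (sum_list w)" by simp
  show ?case
  proof (cases "x = 0")
    case True
    have "sum_list w \<le> length w * n"
      using Cons.prems(2) sum_list_le_mult_length[of w n] by (simp add: mult.commute)
    with True IH show ?thesis by simp
  next
    case False
    then obtain k where "w = replicate k n"
      using Cons.prems(1) successively_x_ordered_positive by blast
    with False show ?thesis by (simp add: sum_list_replicate)
  qed
qed simp

lemma x_normal_word_normal:
  assumes "s \<le> k * n"
  shows "successively (x_ordered n) (x_normal_word n k s) \<and> set (x_normal_word n k s) \<subseteq> {..n}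
    \<and> length (x_normal_word n k s) = k \<and> sum_list (x_normal_word n k s) = s"
  using assms
proof (induction k)
  case (Suc k)
  show ?case
  proof (cases "s \<le> k * n")
    case True
    with Suc.IH show ?thesis by (cases "x_normal_word n k s") (auto simp: x_ordered_def)
  next
    case False
    have "successively (x_ordered n) ((s - k * n) # replicate k n)"
      using successively_x_ordered_replicate[of n k] Suc.prems
      by (cases k) (auto simp: x_ordered_def)
    with False Suc.prems show ?thesis by (auto simp: sum_list_replicate)
  qed
qed simp

lemma xblocks_inj_on_normal:
  assumes "0 < n"
  shows "inj_on (xblocks n) {w. successively (x_ordered n) w \<and> set w \<subseteq> {..n}}"
proof (rule inj_onI)
  fix w w' assume w: "w \<in> {w. successively (x_ordered n) w \<and> set w \<subseteq> {..n}}"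
    and w': "w' \<in> {w. successively (x_ordered n) w \<and> set w \<subseteq> {..n}}"
    and eq: "xblocks n w = xblocks n w'"
  have "uv_word (n * length w - sum_list w) (sum_list w)
      = uv_word (n * length w' - sum_list w') (sum_list w')"
    using eq w w' by (simp add: xblocks_normal)
  then have "n * length w - sum_list w = n * length w' - sum_list w'" "sum_list w = sum_list w'"
    unfolding uv_word_inject by blast+
  moreover have "sum_list w \<le> n * length w" "sum_list w' \<le> n * length w'"
    using w w' by (simp_all add: sum_list_le_mult_length)
  ultimately have "n * length w = n * length w'" "sum_list w = sum_list w'"
    by linarith+
  then have "length w = length w'" "sum_list w = sum_list w'"
    using assms by simp_all
  with w w' show "w = w'" by (metis mem_Collect_eq x_normal_word_unique)
qed

lemma uv_word_eq_xblocks: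
  assumes "n dvd a + b"
  obtains w where "set w \<subseteq> {..n}" "xblocks n w = uv_word a b"
proof -
  from assms obtain k where k: "a + b = n * k" by (auto elim: dvdE)
  then have "b \<le> k * n" "n * k - b = a" by (simp_all add: mult.commute)
  then have "xblocks n (x_normal_word n k b) = uv_word a b" "set (x_normal_word n k b) \<subseteq> {..n}"
    using x_normal_word_normal[of b k n] k by (simp_all add: xblocks_normal)
  then show ?thesis using that by blast
qed

lemma rel1_rewrite_rule:
  assumes "b < a" "a \<le> n"
  shows "rewrite_rule {..n} id a b (rel1 n b a :: nat list \<Rightarrow> 'k::field_char_0)"
  unfolding rewrite_rule_def
proof (intro conjI allI impI)
  have "(\<Sum>k\<le>a. fsmult (of_nat ((n - b) choose k)) (fword [a - k, b]) :: nat list \<Rightarrow> 'k) [a, b]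
      = (\<Sum>k\<le>a. if k = 0 then 1 else 0)"
    unfolding sum_fun_apply using assms(1) by (intro sum.cong) (auto simp: fword_apply)
  then have "(\<Sum>k\<le>a. fsmult (of_nat ((n - b) choose k)) (fword [a - k, b]) :: nat list \<Rightarrow> 'k) [a, b] = 1"
    by simp
  moreover have "(\<Sum>l\<le>b. fsmult (of_nat ((n - a) choose l)) (fword [b - l, a]) :: nat list \<Rightarrow> 'k) [a, b] = 0"
    using assms(1) by (simp add: sum_fun_apply fword_apply)
  ultimately show "(rel1 n b a :: nat list \<Rightarrow> 'k) [a, b] = 1" by (simp add: rel1_def)
next
  fix v assume "(rel1 n b a :: nat list \<Rightarrow> 'k) v \<noteq> 0"
  then have "(\<Sum>k\<le>a. fsmult (of_nat ((n - b) choose k)) (fword [a - k, b]) :: nat list \<Rightarrow> 'k) v \<noteq> 0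
      \<or> (\<Sum>l\<le>b. fsmult (of_nat ((n - a) choose l)) (fword [b - l, a]) :: nat list \<Rightarrow> 'k) v \<noteq> 0"
    by (auto simp: rel1_def)
  then show "v = [a, b] \<or> (\<exists>c d. v = [c, d] \<and> c \<in> {..n} \<and> d \<in> {..n} \<and> id c < id a)"
    using assms by (auto elim!: sum_fsmult_fword_nonzeroE)
qed

lemma rel2_rewrite_rule:
  assumes "1 \<le> a" "a \<le> b" "b < n"
  shows "rewrite_rule {..n} id a b (fsmult (1 / of_nat a) (rel2 n a b) :: nat list \<Rightarrow> 'k::field_char_0)"
  using assms by (auto simp: rewrite_rule_def rel2_def fword_apply)

lemma x_reduces_to_normal:
  fixes p :: "nat list \<Rightarrow> 'k::field_char_0"
  assumes "p \<in> falg {..n}"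
  shows "reduces_to {..n} (relsI n) (successively (x_ordered n)) p"
proof (rule reduces_to_mono[OF falg_reduces_to_normal[where B = "Suc n" and rank = id]])
  show "\<exists>r \<in> fideal {..n} (relsI n :: (nat list \<Rightarrow> 'k) set). rewrite_rule {..n} id a b r"
    if "a \<in> {..n}" "b \<in> {..n}" "\<not> x_ordered n a b" for a b
  proof (cases "b < a")
    case True
    then have "rel1 n b a \<in> fideal {..n} (relsI n :: (nat list \<Rightarrow> 'k) set)"
      using that by (intro fideal.gen) (auto simp: relsI_def)
    with True that show ?thesis using rel1_rewrite_rule by blast
  next
    case False
    with that have ab: "1 \<le> a" "a \<le> b" "b < n" by (auto simp: x_ordered_def)
    then have "fsmult (1 / of_nat a) (rel2 n a b) \<in> fideal {..n} (relsI n :: (nat list \<Rightarrow> 'k) set)"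
      by (intro fideal_smult fideal.gen) (auto simp: relsI_def)
    with ab show ?thesis using rel2_rewrite_rule by blast
  qed
qed (use assms relsI_subset_falg in auto)

section \<open>The Veronese subring as a quotient\<close>

lemma fsubst_jgen_nonzeroE:
  assumes "fsubst (jgen n) p v \<noteq> 0"
  obtains w where "p w \<noteq> 0" "v = xblocks n w"
proof -
  from assms have "(\<Sum>w\<in>fsupport p. fsmult (p w * prod_list (map jgen_coeff w)) (fword (xblocks n w))) v \<noteq> 0"
    by (simp add: fsubst_eq_sum fmono_jgen)
  then show ?thesis using that by (elim sum_fsmult_fword_nonzeroE) auto
qed

lemma fsubst_jgen_apply_xblocks:
  assumes "finite (fsupport p)" "inj_on (xblocks n) (fsupport p)" "p w0 \<noteq> 0"
  shows "fsubst (jgen n) p (xblocks n w0) = p w0 * prod_list (map jgen_coeff w0)"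
proof -
  have "fsubst (jgen n) p (xblocks n w0)
      = (\<Sum>w\<in>fsupport p. p w * (prod_list (map jgen_coeff w) * fword (xblocks n w) (xblocks n w0)))"
    by (simp add: fsubst_eq_sum fmono_jgen sum_fun_apply mult.assoc)
  also have "\<dots> = (\<Sum>w\<in>fsupport p. if w = w0 then p w0 * prod_list (map jgen_coeff w0) else 0)"
    using assms(2,3) by (intro sum.cong) (auto simp: fword_apply dest: inj_onD)
  finally show ?thesis using assms(1,3) by simp
qed

lemma veronese_fsubst_jgen:
  assumes "p \<in> falg {..n}"
  shows "veronese n (fsubst (jgen n) p)"
  unfolding veronese_def
proof (intro conjI allI impI)
  show "fsubst (jgen n) p \<in> falg UNIV" by (rule fsubst_jgen_falg)
  fix v assume "fsubst (jgen n) p v \<noteq> 0"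
  then obtain w where "p w \<noteq> 0" "v = xblocks n w" by (rule fsubst_jgen_nonzeroE)
  with assms show "n dvd length v" by (simp add: length_xblocks falg_set_subset)
qed

lemma fsubst_jgen_onto_xblocks:
  fixes q :: "uv list \<Rightarrow> 'k::field_char_0"
  assumes q: "q \<in> falg UNIV" and blocks: "\<And>v. q v \<noteq> 0 \<Longrightarrow> \<exists>w. set w \<subseteq> {..n} \<and> xblocks n w = v"
  shows "\<exists>p \<in> falg {..n}. fsubst (jgen n) p = q"
proof -
  obtain xw where xw: "\<And>v. q v \<noteq> 0 \<Longrightarrow> set (xw v) \<subseteq> {..n} \<and> xblocks n (xw v) = v"
    using blocks by metis
  have fin: "finite (fsupport q)" using q by (rule falg_finite_fsupport)
  define p where "p = (\<Sum>v\<in>fsupport q. fsmult (q v / prod_list (map jgen_coeff (xw v))) (fword (xw v)))"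
  have "p \<in> falg {..n}"
    unfolding p_def using fin xw by (intro falg_sum falg_smult falg_fword) auto
  moreover have "fsubst (jgen n) p = q"
  proof -
    have "fsubst (jgen n) p
        = (\<Sum>v\<in>fsupport q. fsmult (q v / prod_list (map jgen_coeff (xw v))) (fmono (jgen n) (xw v)))"
      unfolding p_def using fin
      by (simp add: fsubst_sum[where A = UNIV] falg_smult falg_fword fsubst_smult_fword)
    also have "\<dots> = (\<Sum>v\<in>fsupport q. fsmult (q v) (fword v))"
      using xw by (intro sum.cong) (simp_all add: fmono_jgen prod_list_jgen_coeff_nonzero)
    also have "\<dots> = q" using fexpand[OF falg_imp_fsupp[OF q]] by simp
    finally show ?thesis .
  qed
  ultimately show ?thesis by blast
qed

lemma veronese_in_image_mod_jordan_ideal: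
  fixes q :: "uv list \<Rightarrow> 'k::field_char_0"
  assumes "veronese n q"
  shows "\<exists>p \<in> falg {..n}. fsubst (jgen n) p - q \<in> jordan_ideal"
proof -
  have q: "q \<in> falg UNIV" and dvd: "\<And>w. q w \<noteq> 0 \<Longrightarrow> n dvd length w"
    using assms by (auto simp: veronese_def)
  obtain q' where q': "q' \<in> falg UNIV" "q - q' \<in> jordan_ideal"
    and normal: "\<And>v. q' v \<noteq> 0 \<Longrightarrow> (\<exists>a b. v = uv_word a b) \<and> (\<exists>u. q u \<noteq> 0 \<and> length u = length v)"
    using jordan_reduces_to_uv_words[OF q] unfolding reduces_to_def fspan_def jordan_ideal_def by blast
  have "\<exists>w. set w \<subseteq> {..n} \<and> xblocks n w = v" if "q' v \<noteq> 0" for v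
  proof -
    from normal[OF that] dvd obtain a b where "v = uv_word a b" "n dvd a + b" by fastforce
    then show ?thesis by (metis uv_word_eq_xblocks)
  qed
  then obtain p where "p \<in> falg {..n}" "fsubst (jgen n) p = q'"
    using fsubst_jgen_onto_xblocks[OF q'(1)] by blast
  moreover have "q' - q \<in> jordan_ideal"
    using fideal_smult[OF q'(2)[unfolded jordan_ideal_def], of "- 1"]
    by (simp add: fsmult_minus_one jordan_ideal_def)
  ultimately show ?thesis by blast
qed

lemma normal_fsubst_jgen_in_jordan_ideal_eq_0:
  fixes p :: "nat list \<Rightarrow> 'k::field_char_0"
  assumes "0 < n" and p: "p \<in> fspan {..n} (successively (x_ordered n))"
    and J: "fsubst (jgen n) p \<in> jordan_ideal"
  shows "p = 0"
proof -
  have normal: "\<And>w. p w \<noteq> 0 \<Longrightarrow> successively (x_ordered n) w \<and> set w \<subseteq> {..n}"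
    and fin: "finite (fsupport p)"
    using p by (auto simp: fspan_def falg_iff)
  have "fsubst (jgen n) p = 0"
  proof (rule uv_word_combination_eq_0)
    fix v assume "fsubst (jgen n) p v \<noteq> 0"
    then obtain w where "p w \<noteq> 0" "v = xblocks n w" by (rule fsubst_jgen_nonzeroE)
    with normal show "\<exists>a b. v = uv_word a b" by (metis xblocks_normal)
  qed (rule jordan_functional_jordan_ideal[OF J])
  moreover have inj: "inj_on (xblocks n) (fsupport p)"
    by (rule inj_on_subset[OF xblocks_inj_on_normal[OF assms(1)]]) (use normal in force)
  ultimately have "p w * prod_list (map jgen_coeff w) = 0" if "p w \<noteq> 0" for w
    using fsubst_jgen_apply_xblocks[OF fin inj that] by simp
  then show ?thesis using prod_list_jgen_coeff_nonzero by fastforce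
qed

lemma fsubst_jgen_kernel:
  fixes p :: "nat list \<Rightarrow> 'k::field_char_0"
  assumes "0 < n" "p \<in> falg {..n}" "fsubst (jgen n) p \<in> jordan_ideal"
  shows "p \<in> fideal {..n} (relsI n)"
proof -
  obtain p' where p': "p' \<in> fspan {..n} (successively (x_ordered n))" "p - p' \<in> fideal {..n} (relsI n)"
    using x_reduces_to_normal[OF assms(2)] unfolding reduces_to_def by blast
  have "fsubst (jgen n) p' = fsubst (jgen n) p - fsubst (jgen n) (p - p')"
    using fsubst_diff[of p "p - p'" "jgen n"] assms(2) p'(1)
    by (auto intro: falg_imp_fsupp falg_diff simp: fspan_def)
  also have "\<dots> \<in> jordan_ideal"
    using assms(3) fsubst_jgen_fideal[OF p'(2)] unfolding jordan_ideal_def by (rule fideal_diff)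
  finally have "p' = 0" by (rule normal_fsubst_jgen_in_jordan_ideal_eq_0[OF assms(1) p'(1)])
  with p'(2) show ?thesis by simp
qed

theorem mainTheorem12:
  fixes n :: nat
  assumes "n \<ge> 2"
    and alg_closed: "\<forall>p :: 'k::field_char_0 poly. degree p > 0 \<longrightarrow> (\<exists>x. poly p x = 0)"
  shows "(\<forall>p \<in> falg {..n}. veronese n (fsubst (jgen n :: nat \<Rightarrow> uv list \<Rightarrow> 'k) p))
       \<and> (\<forall>q :: uv list \<Rightarrow> 'k. veronese n q \<longrightarrow>
            (\<exists>p \<in> falg {..n}. fsubst (jgen n) p - q \<in> jordan_ideal))
       \<and> (\<forall>p \<in> falg {..n}. fsubst (jgen n :: nat \<Rightarrow> uv list \<Rightarrow> 'k) p \<in> jordan_ideal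
            \<longleftrightarrow> p \<in> fideal {..n} (relsI n))"
proof -
  \<comment> \<open>only \<open>n > 0\<close> and characteristic \<open>0\<close> are needed\<close>
  have "0 < n" using assms(1) by simp
  then show ?thesis
    using veronese_fsubst_jgen veronese_in_image_mod_jordan_ideal
      fsubst_jgen_fideal fsubst_jgen_kernel
    by blast
qed

end
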